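(* Let $\pi\in\{2143,1234\}$ and $w\in B_n$. If $w$ contains $\pi$, then there exist indices $-n\leq i_1<i_2<i_3<i_4\leq n$ (all nonzero) at which $w$ forms the pattern $\pi$ and such that there is no $k\in\{1,2,3,4\}$ with $i_k>0$ and $w(i_k)<0$.
   Context: $B_n$ is the group of permutations $w$ of $\{-n,\ldots,-1,1,\ldots,n\}$ with $w(-i)=-w(i)$. Indices $i_1<i_2<i_3<i_4$ form the pattern $1234$ if $w(i_1)<w(i_2)<w(i_3)<w(i_4)$, and form the pattern $2143$ if $w(i_2)<w(i_1)<w(i_4)<w(i_3)$. $w$ contains $\pi$ if some such quadruple of indices forms $\pi$. *)

theory Defs
  imports Main
begin

definition signed_set :: "nat \<Rightarrow> int set" where
  "signed_set n = {i. i \<noteq> 0 \<and> - int n \<le> i \<and> i \<le> int n}"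

text \<open>Elements of the hyperoctahedral group B_n: permutations w of the signed set with w(-i) = -w(i).
  Values outside the signed set are irrelevant; we fix them to be the identity.\<close>
definition in_B :: "nat \<Rightarrow> (int \<Rightarrow> int) \<Rightarrow> bool" where
  "in_B n w \<longleftrightarrow> bij_betw w (signed_set n) (signed_set n)
     \<and> (\<forall>i \<in> signed_set n. w (- i) = - w i)
     \<and> (\<forall>i. i \<notin> signed_set n \<longrightarrow> w i = i)"

datatype pattern = P1234 | P2143

definition forms :: "pattern \<Rightarrow> (int \<Rightarrow> int) \<Rightarrow> int \<Rightarrow> int \<Rightarrow> int \<Rightarrow> int \<Rightarrow> bool" where
  "forms p w i1 i2 i3 i4 \<longleftrightarrow> i1 < i2 \<and> i2 < i3 \<and> i3 < i4 \<and>
     (case p of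
        P1234 \<Rightarrow> w i1 < w i2 \<and> w i2 < w i3 \<and> w i3 < w i4
      | P2143 \<Rightarrow> w i2 < w i1 \<and> w i1 < w i4 \<and> w i4 < w i3)"

definition contains :: "nat \<Rightarrow> pattern \<Rightarrow> (int \<Rightarrow> int) \<Rightarrow> bool" where
  "contains n p w \<longleftrightarrow> (\<exists>i1 i2 i3 i4. i1 \<in> signed_set n \<and> i2 \<in> signed_set n \<and>
     i3 \<in> signed_set n \<and> i4 \<in> signed_set n \<and> forms p w i1 i2 i3 i4)"

end

theory Submission
  imports Defs
begin

text \<open>
  Since \<open>w\<close> is odd, an occurrence \<open>i\<^sub>1 < i\<^sub>2 < i\<^sub>3 < i\<^sub>4\<close> of \<open>\<pi>\<close> reflects to an occurrence
  \<open>-i\<^sub>4 < -i\<^sub>3 < -i\<^sub>2 < -i\<^sub>1\<close> of the same pattern, both patterns being invariant under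
  reverse-complement. If both contain a positive position with negative value, then the
  occurrence has positions \<open>j < 0 < k\<close> with \<open>w j > 0 > w k\<close>, an inversion. The pattern 1234 has
  none; in 2143 it is the pair of the first two or of the last two positions, and then the
  other pair together with its mirror image is an occurrence of 2143 without sign changes.
\<close>

definition sign_flip_free :: "(int \<Rightarrow> int) \<Rightarrow> int set \<Rightarrow> bool" where
  "sign_flip_free w K \<longleftrightarrow> \<not> (\<exists>k \<in> K. k > 0 \<and> w k < 0)"

lemma uminus_in_signed_set_iff [simp]: "- i \<in> signed_set n \<longleftrightarrow> i \<in> signed_set n"
  unfolding signed_set_def by auto

lemma in_B_odd:
  assumes "in_B n w"
  shows "w (- i) = - w i"
proof (cases "i \<in> signed_set n")
  case True
  then show ?thesis using assms unfolding in_B_def by blast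
next
  case False
  then have "- i \<notin> signed_set n" by simp
  with False show ?thesis using assms unfolding in_B_def by simp
qed

lemma forms_reflect:
  assumes odd: "\<And>i. w (- i) = - w i"
  shows "forms p w (- i4) (- i3) (- i2) (- i1) \<longleftrightarrow> forms p w i1 i2 i3 i4"
  unfolding forms_def odd by (cases p) auto

lemma sign_flips_of_occurrence_and_reflection:
  assumes odd: "\<And>i. w (- i) = - w i"
    and "\<not> sign_flip_free w {a, b, c, d}" and "\<not> sign_flip_free w {- d, - c, - b, - a}"
  obtains j k where "j \<in> {a, b, c, d}" "k \<in> {a, b, c, d}" "j < 0" "0 < k" "0 < w j" "w k < 0"
  using assms unfolding sign_flip_free_def by auto

lemma forms_P1234_no_inversion:
  assumes "forms P1234 w a b c d" "j \<in> {a, b, c, d}" "k \<in> {a, b, c, d}" "j < k"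
  shows "w j < w k"
  using assms unfolding forms_def by auto

lemma forms_P2143_inversion_cases:
  assumes "forms P2143 w a b c d" "j \<in> {a, b, c, d}" "k \<in> {a, b, c, d}" "j < k" "w k < w j"
  shows "(j = a \<and> k = b) \<or> (j = c \<and> k = d)"
  using assms unfolding forms_def by auto

lemma forms_P2143_mirror_half:
  assumes odd: "\<And>i. w (- i) = - w i" and occ: "forms P2143 w a b c d"
    and jk: "j \<in> {a, b, c, d}" "k \<in> {a, b, c, d}"
    and signs: "j < 0" "0 < k" "0 < w j" "w k < 0"
  shows "(forms P2143 w a b (- b) (- a) \<and> sign_flip_free w {a, b, - b, - a}) \<or>
         (forms P2143 w (- d) (- c) c d \<and> sign_flip_free w {- d, - c, c, d})"
proof -
  have "(j = a \<and> k = b) \<or> (j = c \<and> k = d)"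
    using forms_P2143_inversion_cases[OF occ jk] signs by simp
  then have "(b < 0 \<and> w a < 0) \<or> (0 < c \<and> 0 < w d)"
    using occ signs unfolding forms_def by auto
  then show ?thesis
    using occ unfolding forms_def sign_flip_free_def by (auto simp: odd)
qed

lemma sign_flip_free_occurrence:
  assumes odd: "\<And>i. w (- i) = - w i" and occ: "forms p w a b c d"
    and S: "{a, b, c, d} \<subseteq> S" and S_uminus: "\<And>i. i \<in> S \<Longrightarrow> - i \<in> S"
  obtains i1 i2 i3 i4 where "{i1, i2, i3, i4} \<subseteq> S"
    "forms p w i1 i2 i3 i4" "sign_flip_free w {i1, i2, i3, i4}"
proof -
  have S_mirror: "{- d, - c, - b, - a} \<subseteq> S" "{a, b, - b, - a} \<subseteq> S" "{- d, - c, c, d} \<subseteq> S"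
    using S S_uminus by simp_all
  show thesis
  proof (cases "sign_flip_free w {a, b, c, d}")
    case True
    then show thesis by (rule that[OF S occ])
  next
    case flip: False
    show thesis
    proof (cases "sign_flip_free w {- d, - c, - b, - a}")
      case True
      moreover have "forms p w (- d) (- c) (- b) (- a)" using occ forms_reflect[of w, OF odd] by blast
      ultimately show thesis using that S_mirror(1) by blast
    next
      case False
      then obtain j k where jk: "j \<in> {a, b, c, d}" "k \<in> {a, b, c, d}"
        and signs: "j < 0" "0 < k" "0 < w j" "w k < 0"
        using sign_flips_of_occurrence_and_reflection[OF odd flip] by blast
      show thesis
      proof (cases p)
        case P1234
        have "j < k" "w k < w j" using signs by simp_all
        then show thesis using forms_P1234_no_inversion[OF occ[unfolded P1234] jk] by fastforce
      next
        case P2143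
        then show thesis
          using forms_P2143_mirror_half[OF odd occ[unfolded P2143] jk signs] that S_mirror(2,3)
          by blast
      qed
    qed
  qed
qed

theorem lemma2p2:
  fixes n :: nat and p :: pattern and w :: "int \<Rightarrow> int"
  assumes "in_B n w" and "contains n p w"
  shows "\<exists>i1 i2 i3 i4. i1 \<in> signed_set n \<and> i2 \<in> signed_set n \<and>
           i3 \<in> signed_set n \<and> i4 \<in> signed_set n \<and> forms p w i1 i2 i3 i4 \<and>
           \<not> (\<exists>k \<in> {i1, i2, i3, i4}. k > 0 \<and> w k < 0)"
proof -
  obtain a b c d where occ: "forms p w a b c d" and "{a, b, c, d} \<subseteq> signed_set n"
    using assms(2) unfolding contains_def by blast
  with in_B_odd[OF assms(1)] obtain i1 i2 i3 i4 where "{i1, i2, i3, i4} \<subseteq> signed_set n"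
    "forms p w i1 i2 i3 i4" "sign_flip_free w {i1, i2, i3, i4}"
    by (rule sign_flip_free_occurrence) simp
  then show ?thesis unfolding sign_flip_free_def by auto
qed

end
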